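(* Let $\bar L^g>0$, $\gamma_0>0$, $\beta_0:=\bar L^g/\gamma_0$, and let $c_k\in(-1,1]$ for $k\ge0$. Define $a_0:=\big(1+c_0+\sqrt{4(1-c_0)+(1+c_0)^2}\big)/2$, $a_{k+1}:=\big(1+c_{k+1}+\sqrt{4a_k^2+(1-c_{k+1})^2}\big)/2$, $\tau_k:=a_k^{-1}$, $\beta_{k+1}:=(1-\tau_k)\beta_k$, $\gamma_{k+1}:=(1-c_k\tau_k)\gamma_k$, and $s_k:=\sum_{i=1}^kc_i$. Then for all $k\ge0$, $$\frac{k+a_0+s_k}{2}\le a_k\le k+a_0,\qquad \frac{\bar L^g}{(k+a_0)^2}\le\gamma_{k+1}\beta_{k+1}\le\frac{4\bar L^g}{(k+a_0+s_k)^2}.$$ Moreover, if $c_k=0$ for all $k$, then $\frac{\beta_0}{(k+2)^2}\le\beta_{k+1}\le\frac{4\beta_0}{(k+1)^2}$, and if $c_k=1$ for all $k$, then $\beta_{k+1}=\frac{\beta_0}{k+2}$. *)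

theory Defs
  imports Complex_Main
begin

primrec aseq :: "(nat \<Rightarrow> real) \<Rightarrow> nat \<Rightarrow> real" where
  "aseq c 0 = (1 + c 0 + sqrt (4 * (1 - c 0) + (1 + c 0)^2)) / 2"
| "aseq c (Suc k) = (1 + c (Suc k) + sqrt (4 * (aseq c k)^2 + (1 - c (Suc k))^2)) / 2"

definition tau :: "(nat \<Rightarrow> real) \<Rightarrow> nat \<Rightarrow> real" where
  "tau c k = inverse (aseq c k)"

primrec betaseq :: "real \<Rightarrow> real \<Rightarrow> (nat \<Rightarrow> real) \<Rightarrow> nat \<Rightarrow> real" where
  "betaseq Lg g0 c 0 = Lg / g0"
| "betaseq Lg g0 c (Suc k) = (1 - tau c k) * betaseq Lg g0 c k"

primrec gammaseq :: "real \<Rightarrow> (nat \<Rightarrow> real) \<Rightarrow> nat \<Rightarrow> real" where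
  "gammaseq g0 c 0 = g0"
| "gammaseq g0 c (Suc k) = (1 - c k * tau c k) * gammaseq g0 c k"

definition sseq :: "(nat \<Rightarrow> real) \<Rightarrow> nat \<Rightarrow> real" where
  "sseq c k = (\<Sum>i=1..k. c i)"

end

theory Submission
  imports Defs
begin

text \<open>
  Both defining equations of \<open>a\<^sub>k\<close> take the larger root of \<open>(x - 1)(x - c\<^sub>k) = q\<^sup>2\<close>,
  with \<open>q = 1\<close> for \<open>k = 0\<close> and \<open>q = a\<^sub>k\<^sub>-\<^sub>1\<close> afterwards. Since the product \<open>\<gamma>\<beta>\<close> is multiplied
  at step \<open>k\<close> by \<open>(1 - \<tau>\<^sub>k)(1 - c\<^sub>k\<tau>\<^sub>k) = (a\<^sub>k - 1)(a\<^sub>k - c\<^sub>k) / a\<^sub>k\<^sup>2\<close>, it telescopes to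
  \<open>\<gamma>\<^sub>k\<^sub>+\<^sub>1 \<beta>\<^sub>k\<^sub>+\<^sub>1 = L / a\<^sub>k\<^sup>2\<close>. The same root description gives
  \<open>2a\<^sub>k + 1 + c\<^sub>k\<^sub>+\<^sub>1 \<le> 2a\<^sub>k\<^sub>+\<^sub>1 \<le> 2a\<^sub>k + 2\<close>, and summing these yields the bounds on \<open>a\<^sub>k\<close>,
  hence on \<open>\<gamma>\<^sub>k\<^sub>+\<^sub>1 \<beta>\<^sub>k\<^sub>+\<^sub>1\<close>.
\<close>

definition upper_root :: "real \<Rightarrow> real \<Rightarrow> real" where
  "upper_root d q = (1 + d + sqrt (4 * q\<^sup>2 + (1 - d)\<^sup>2)) / 2"

lemma upper_root_eq: "(upper_root d q - 1) * (upper_root d q - d) = q\<^sup>2"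
proof -
  define r where "r = sqrt (4 * q\<^sup>2 + (1 - d)\<^sup>2)"
  have "r\<^sup>2 = 4 * q\<^sup>2 + (1 - d)\<^sup>2"
    unfolding r_def by simp
  moreover have "(upper_root d q - 1) * (upper_root d q - d) = (r\<^sup>2 - (1 - d)\<^sup>2) / 4"
    unfolding upper_root_def r_def[symmetric] by (simp add: field_simps power2_eq_square)
  ultimately show ?thesis by simp
qed

lemma upper_root_lower_bound: "2 * \<bar>q\<bar> + 1 + d \<le> 2 * upper_root d q"
proof -
  have "sqrt ((2 * q)\<^sup>2) \<le> sqrt (4 * q\<^sup>2 + (1 - d)\<^sup>2)"
    by (intro real_sqrt_le_mono) (simp add: power_mult_distrib)
  then show ?thesis
    unfolding upper_root_def real_sqrt_abs by simp
qed

lemma upper_root_upper_bound: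
  assumes "q \<ge> 0" and "d \<le> 1"
  shows "upper_root d q \<le> q + 1"
proof -
  have "4 * q\<^sup>2 + (1 - d)\<^sup>2 \<le> (2 * q + (1 - d))\<^sup>2"
    using assms mult_right_mono[of d 1 q] by (simp add: power2_eq_square algebra_simps)
  then have "sqrt (4 * q\<^sup>2 + (1 - d)\<^sup>2) \<le> 2 * q + (1 - d)"
    using assms real_sqrt_le_mono[of _ "(2 * q + (1 - d))\<^sup>2"] by simp
  then show ?thesis
    unfolding upper_root_def by simp
qed

lemma aseq_0_upper_root: "aseq c 0 = upper_root (c 0) 1"
  by (simp add: upper_root_def power2_eq_square algebra_simps)

lemma aseq_Suc_upper_root: "aseq c (Suc k) = upper_root (c (Suc k)) (aseq c k)"
  by (simp add: upper_root_def)

declare aseq.simps [simp del]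

lemma aseq_gt_1:
  assumes "\<And>k. -1 < c k"
  shows "aseq c k > 1"
proof (induction k)
  case 0
  show ?case
    using upper_root_lower_bound[of 1 "c 0"] assms[of 0] by (simp add: aseq_0_upper_root)
next
  case (Suc k)
  show ?case
    using upper_root_lower_bound[of "aseq c k" "c (Suc k)"] assms[of "Suc k"] Suc
    by (simp add: aseq_Suc_upper_root)
qed

lemma aseq_upper_bound:
  assumes "\<And>k. -1 < c k" and "\<And>k. c k \<le> 1"
  shows "aseq c k \<le> real k + aseq c 0"
proof (induction k)
  case (Suc k)
  have "aseq c (Suc k) \<le> aseq c k + 1"
    unfolding aseq_Suc_upper_root
    using upper_root_upper_bound aseq_gt_1[of c k, OF assms(1)] assms(2) by (simp add: less_imp_le)
  with Suc show ?case by simp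
qed simp

lemma sseq_Suc: "sseq c (Suc k) = sseq c k + c (Suc k)"
  by (simp add: sseq_def)

lemma aseq_lower_bound:
  assumes "\<And>k. -1 < c k"
  shows "real k + aseq c 0 + sseq c k \<le> 2 * aseq c k"
proof (induction k)
  case 0
  show ?case
    using aseq_gt_1[of c 0, OF assms] by (simp add: sseq_def)
next
  case (Suc k)
  have "2 * aseq c k + 1 + c (Suc k) \<le> 2 * aseq c (Suc k)"
    using upper_root_lower_bound[of "aseq c k" "c (Suc k)"] aseq_gt_1[of c k, OF assms]
    by (simp add: aseq_Suc_upper_root)
  with Suc show ?case by (simp add: sseq_Suc)
qed

lemma sseq_lower_bound:
  assumes "\<And>k. -1 < c k"
  shows "- real k \<le> sseq c k"
proof (induction k)
  case (Suc k)
  with assms[of "Suc k"] show ?case by (simp add: sseq_Suc)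
qed (simp add: sseq_def)

lemma step_factor_eq_div_square:
  fixes a d :: real
  assumes "a \<noteq> 0"
  shows "(1 - d * inverse a) * (1 - inverse a) = (a - 1) * (a - d) / a\<^sup>2"
  using assms by (simp add: field_simps power2_eq_square)

lemma gammaseq_betaseq_Suc:
  assumes "\<And>k. -1 < c k" and "g0 \<noteq> 0"
  shows "gammaseq g0 c (Suc k) * betaseq Lg g0 c (Suc k) = Lg / (aseq c k)\<^sup>2"
proof (induction k)
  case 0
  have "gammaseq g0 c 1 * betaseq Lg g0 c 1
        = (aseq c 0 - 1) * (aseq c 0 - c 0) / (aseq c 0)\<^sup>2 * Lg"
    using step_factor_eq_div_square[of "aseq c 0" "c 0"] aseq_gt_1[of c 0, OF assms(1)] assms(2)
    by (simp add: tau_def) (metis mult.assoc times_divide_eq_left)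
  then show ?case
    using upper_root_eq[of "c 0" 1] by (simp add: aseq_0_upper_root)
next
  case (Suc k)
  have a_nonzero: "aseq c (Suc k) \<noteq> 0"
    using aseq_gt_1[of c "Suc k", OF assms(1)] by simp
  have "gammaseq g0 c (Suc (Suc k)) * betaseq Lg g0 c (Suc (Suc k))
        = (aseq c (Suc k) - 1) * (aseq c (Suc k) - c (Suc k)) / (aseq c (Suc k))\<^sup>2
          * (gammaseq g0 c (Suc k) * betaseq Lg g0 c (Suc k))"
    using step_factor_eq_div_square[OF a_nonzero, of "c (Suc k)"]
    by (simp only: gammaseq.simps(2)[of g0 c "Suc k"] betaseq.simps(2)[of Lg g0 c "Suc k"]
        tau_def mult_ac)
  also have "(aseq c (Suc k) - 1) * (aseq c (Suc k) - c (Suc k)) = (aseq c k)\<^sup>2"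
    using upper_root_eq by (simp add: aseq_Suc_upper_root)
  finally show ?case
    using Suc aseq_gt_1[of c k, OF assms(1)] by (simp add: field_simps)
qed

lemma divide_square_bounds:
  fixes B l x u :: real
  assumes "0 < l" and "l \<le> x" and "x \<le> u" and "0 \<le> B"
  shows "B / u\<^sup>2 \<le> B / x\<^sup>2" and "B / x\<^sup>2 \<le> B / l\<^sup>2"
  using assms by (auto intro!: divide_left_mono power_mono mult_pos_pos)

lemma betaseq_Suc_c_zero:
  assumes "\<And>k. c k = 0" and "g0 \<noteq> 0"
  shows "betaseq Lg g0 c (Suc k) = betaseq Lg g0 c 0 / (aseq c k)\<^sup>2"
proof -
  have "gammaseq g0 c (Suc k) = g0"
    by (induction k) (simp_all add: assms(1))
  moreover have "gammaseq g0 c (Suc k) * betaseq Lg g0 c (Suc k) = Lg / (aseq c k)\<^sup>2"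
    by (rule gammaseq_betaseq_Suc) (simp_all add: assms)
  ultimately have "g0 * betaseq Lg g0 c (Suc k) = Lg / (aseq c k)\<^sup>2"
    by (simp only:)
  then have "betaseq Lg g0 c (Suc k) = Lg / (aseq c k)\<^sup>2 / g0"
    using assms(2) by (metis nonzero_mult_div_cancel_left)
  then show ?thesis
    by (simp add: mult.commute del: betaseq.simps(2))
qed

lemma aseq_0_c_zero_le_2:
  assumes "c 0 = 0"
  shows "aseq c 0 \<le> 2"
proof -
  have "sqrt 5 \<le> sqrt (3\<^sup>2)"
    by (intro real_sqrt_le_mono) simp
  then show ?thesis
    using assms by (simp add: aseq.simps)
qed

lemma aseq_c_one:
  assumes "\<And>k. c k = 1"
  shows "aseq c k = real k + 2"
proof (induction k)
  case (Suc k)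
  have "4 * (real k + 2)\<^sup>2 = (2 * (real k + 2))\<^sup>2"
    by (simp add: power2_eq_square algebra_simps)
  with Suc show ?case
    by (simp add: assms aseq_Suc_upper_root upper_root_def)
qed (simp add: assms aseq.simps)

lemma betaseq_Suc_c_one:
  assumes "\<And>k. c k = 1"
  shows "betaseq Lg g0 c (Suc k) = betaseq Lg g0 c 0 / (real k + 2)"
proof (induction k)
  case 0
  show ?case by (simp add: tau_def aseq_c_one[OF assms])
next
  case (Suc k)
  have "1 - inverse (real k + 3) = (real k + 2) / (real k + 3)"
    by (simp add: field_simps)
  with Suc show ?case
    by (simp add: tau_def aseq_c_one[OF assms] add.commute del: betaseq.simps(1))
qed

lemma gammaseq_betaseq_Suc_bounds:
  assumes "\<And>k. -1 < c k" and "\<And>k. c k \<le> 1" and "0 \<le> Lg" and "g0 \<noteq> 0"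
  shows "Lg / (real k + aseq c 0)\<^sup>2 \<le> gammaseq g0 c (Suc k) * betaseq Lg g0 c (Suc k)"
    and "gammaseq g0 c (Suc k) * betaseq Lg g0 c (Suc k) \<le> 4 * Lg / (real k + aseq c 0 + sseq c k)\<^sup>2"
  using divide_square_bounds[of "(real k + aseq c 0 + sseq c k) / 2" "aseq c k" "real k + aseq c 0" Lg]
    aseq_lower_bound[of c k, OF assms(1)] aseq_upper_bound[of c k, OF assms(1,2)]
    sseq_lower_bound[of c k, OF assms(1)] aseq_gt_1[of c 0, OF assms(1)]
    gammaseq_betaseq_Suc[of c, OF assms(1,4)] assms(3)
  by (simp_all add: power_divide mult.commute del: gammaseq.simps betaseq.simps)

lemma betaseq_Suc_bounds_c_zero:
  assumes "\<And>k. c k = 0" and "0 \<le> Lg" and "0 < g0"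
  shows "betaseq Lg g0 c 0 / (real k + 2)\<^sup>2 \<le> betaseq Lg g0 c (Suc k)"
    and "betaseq Lg g0 c (Suc k) \<le> 4 * betaseq Lg g0 c 0 / (real k + 1)\<^sup>2"
proof -
  have gt: "-1 < c k" for k
    by (simp add: assms(1))
  have "real k + 1 \<le> 2 * aseq c k" and "aseq c k \<le> real k + 2"
    using aseq_lower_bound[of c k, OF gt] aseq_upper_bound[of c k, OF gt] aseq_0_c_zero_le_2[of c]
      aseq_gt_1[of c 0, OF gt] assms(1) by (simp_all add: sseq_def)
  moreover have "betaseq Lg g0 c 0 \<ge> 0"
    using assms(2,3) by simp
  ultimately show "betaseq Lg g0 c 0 / (real k + 2)\<^sup>2 \<le> betaseq Lg g0 c (Suc k)"
    and "betaseq Lg g0 c (Suc k) \<le> 4 * betaseq Lg g0 c 0 / (real k + 1)\<^sup>2"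
    using divide_square_bounds[of "(real k + 1) / 2" "aseq c k" "real k + 2" "betaseq Lg g0 c 0"]
      betaseq_Suc_c_zero[of c g0 Lg k] assms
    by (simp_all add: power_divide mult.commute del: betaseq.simps)
qed

theorem lemma4p4:
  fixes Lg g0 :: real and c :: "nat \<Rightarrow> real"
  assumes "Lg > 0" and "g0 > 0"
    and "\<forall>k. -1 < c k \<and> c k \<le> 1"
  shows "(\<forall>k. (real k + aseq c 0 + sseq c k) / 2 \<le> aseq c k
            \<and> aseq c k \<le> real k + aseq c 0
            \<and> Lg / (real k + aseq c 0)^2
                \<le> gammaseq g0 c (Suc k) * betaseq Lg g0 c (Suc k)
            \<and> gammaseq g0 c (Suc k) * betaseq Lg g0 c (Suc k)
                \<le> 4 * Lg / (real k + aseq c 0 + sseq c k)^2)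
       \<and> ((\<forall>k. c k = 0) \<longrightarrow>
            (\<forall>k. betaseq Lg g0 c 0 / (real k + 2)^2 \<le> betaseq Lg g0 c (Suc k)
               \<and> betaseq Lg g0 c (Suc k) \<le> 4 * betaseq Lg g0 c 0 / (real k + 1)^2))
       \<and> ((\<forall>k. c k = 1) \<longrightarrow>
            (\<forall>k. betaseq Lg g0 c (Suc k) = betaseq Lg g0 c 0 / (real k + 2)))"
proof -
  have gt: "\<And>k. -1 < c k" and le: "\<And>k. c k \<le> 1"
    using assms(3) by auto
  have "(real k + aseq c 0 + sseq c k) / 2 \<le> aseq c k" for k
    using aseq_lower_bound[of c k, OF gt] by simp
  moreover note aseq_upper_bound[of c, OF gt le]
  moreover note gammaseq_betaseq_Suc_bounds[of c, OF gt le, of Lg g0] assms(1,2)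
  moreover note betaseq_Suc_bounds_c_zero[of c Lg g0] betaseq_Suc_c_one[of c Lg g0]
  ultimately show ?thesis
    by (auto simp del: gammaseq.simps betaseq.simps)
qed

end
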